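(* Let $X$ be a real Banach space and let $Y,Z$ be closed subspaces of $X$ with $Z\subseteq Y\subseteq X$. If $Z$ is a semi $M$-ideal in $X$ and $Y/Z$ has property-$(wU)$ in $X/Z$, then $Y$ has property-$(wU)$ in $X$.
   Context: $Y$ has property-$(wU)$ in $X$ if every $y^*\in Y^*$ that attains its norm on the unit sphere $S_Y$ (i.e. $\|y^*\|=y^*(y_0)$ for some $y_0\in S_Y$) has a unique extension $x^*\in X^*$ with $x^*|_Y=y^*$ and $\|x^*\|=\|y^*\|$. A closed subspace $J$ of $X$ is a semi $M$-ideal if $X^*=J^\perp\oplus_{\ell_1}W$ for some closed subset $W\subseteq X^*$, i.e. every $x^*\in X^*$ decomposes uniquely as $x^*=u+w$ with $u\in J^\perp$, $w\in W$, and $\|x^*\|=\|u\|+\|w\|$ (equivalently, $J$ has the $2$-ball property in $X$); here $J^\perp=\{x^*\in X^*:x^*|_J=0\}$. $Y/Z$ is regarded as a subspace of $X/Z$ with the quotient norm. *)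

theory Defs
  imports "HOL-Analysis.Analysis"
begin

text \<open>Bounded linear functionals on a subspace S of the ambient normed space
  (represented as real-valued functions; only their values on S matter).\<close>
definition sub_dual :: "'a::real_normed_vector set \<Rightarrow> ('a \<Rightarrow> real) \<Rightarrow> bool" where
  "sub_dual S g \<longleftrightarrow>
     (\<forall>x\<in>S. \<forall>y\<in>S. g (x + y) = g x + g y) \<and>
     (\<forall>c. \<forall>x\<in>S. g (c *\<^sub>R x) = c * g x) \<and>
     (\<exists>K. \<forall>x\<in>S. \<bar>g x\<bar> \<le> K * norm x)"

definition dual_norm_on :: "'a::real_normed_vector set \<Rightarrow> ('a \<Rightarrow> real) \<Rightarrow> real" where
  "dual_norm_on S g = (SUP x\<in>{x\<in>S. norm x \<le> 1}. \<bar>g x\<bar>)"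

definition property_wU :: "'a::real_normed_vector set \<Rightarrow> bool" where
  "property_wU Y \<longleftrightarrow>
     (\<forall>g. sub_dual Y g \<and> (\<exists>y0\<in>Y. norm y0 = 1 \<and> g y0 = dual_norm_on Y g) \<longrightarrow>
        (\<exists>!x::'a \<Rightarrow>\<^sub>L real. (\<forall>y\<in>Y. blinfun_apply x y = g y) \<and> norm x = dual_norm_on Y g))"

definition annihilator :: "'a::real_normed_vector set \<Rightarrow> ('a \<Rightarrow>\<^sub>L real) set" where
  "annihilator J = {f. \<forall>z\<in>J. blinfun_apply f z = 0}"

text \<open>Semi M-ideal: X* = J^perp (+)_l1 W for some closed subset W of X*.\<close>
definition semi_M_ideal :: "'a::real_normed_vector set \<Rightarrow> bool" where
  "semi_M_ideal J \<longleftrightarrow>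
     (\<exists>W :: ('a \<Rightarrow>\<^sub>L real) set. closed W \<and>
        (\<forall>f. \<exists>!p. fst p \<in> annihilator J \<and> snd p \<in> W \<and> f = fst p + snd p) \<and>
        (\<forall>u\<in>annihilator J. \<forall>w\<in>W. norm (u + w) = norm u + norm w))"

definition realises_quotient :: "'a::real_normed_vector set \<Rightarrow> ('a \<Rightarrow> 'b::real_normed_vector) \<Rightarrow> bool" where
  "realises_quotient Z q \<longleftrightarrow> linear q \<and> surj q \<and> (\<forall>x. q x = 0 \<longleftrightarrow> x \<in> Z) \<and>
     (\<forall>x. norm (q x) = infdist x Z)"

end

(* Let g attain its norm N at y0 and let f1, f2 be norm-preserving Hahn-Banach extensions of g.
   Since f1 - f2 vanishes on Z, the semi M-ideal decomposition writes f1 = u1 + w, f2 = u2 + w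
   with the same w in W and u1, u2 in the annihilator of Z, both of norm N - norm w.
   Then u1 and u2 agree on Y, and u1 attains its norm at y0. Being zero on Z, they factor through
   X/Z as functionals of the same norm, whose common restriction to Y/Z attains its norm at the
   image of y0. Property-(wU) of Y/Z makes the two factors equal, hence u1 = u2 and f1 = f2. *)
theory Submission
  imports Defs
begin

(* Partial functionals bounded by N * norm are handled through their graphs, so that Zorn's
   lemma applies to sets ordered by inclusion. *)
definition dominated_graph :: "real \<Rightarrow> ('a::real_normed_vector \<times> real) set \<Rightarrow> bool" where
  "dominated_graph N M \<longleftrightarrow> subspace M \<and> (\<forall>(x, a)\<in>M. a \<le> N * norm x)"

lemma dominated_graph_functional:
  assumes "dominated_graph N M" "(x, a) \<in> M" "(x, b) \<in> M"
  shows "a = b"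
proof -
  have "(x, a) - (x, b) \<in> M" "(x, b) - (x, a) \<in> M"
    using assms subspace_diff unfolding dominated_graph_def by blast+
  then have "a - b \<le> 0" "b - a \<le> 0"
    using assms(1) unfolding dominated_graph_def by fastforce+
  then show ?thesis by simp
qed

lemma dominated_graph_Union_chain:
  assumes "C \<noteq> {}" "chain\<^sub>\<subseteq> C" "\<forall>M\<in>C. dominated_graph N M"
  shows "dominated_graph N (\<Union>C)"
proof -
  have "subspace (\<Union>C)"
    unfolding subspace_def
  proof (intro conjI ballI allI)
    show "0 \<in> \<Union>C"
      using assms(1,3) subspace_0 unfolding dominated_graph_def by blast
  next
    fix p p' assume "p \<in> \<Union>C" "p' \<in> \<Union>C"
    then obtain M M' where "M \<in> C" "M' \<in> C" "p \<in> M" "p' \<in> M'" by blast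
    moreover have "M \<subseteq> M' \<or> M' \<subseteq> M"
      using assms(2) \<open>M \<in> C\<close> \<open>M' \<in> C\<close> unfolding chain_subset_def by blast
    ultimately show "p + p' \<in> \<Union>C"
      using assms(3) subspace_add unfolding dominated_graph_def by blast
  next
    fix c :: real and p assume "p \<in> \<Union>C"
    then show "c *\<^sub>R p \<in> \<Union>C"
      using assms(3) subspace_mul unfolding dominated_graph_def by blast
  qed
  then show ?thesis
    using assms(3) unfolding dominated_graph_def by blast
qed

lemma dominated_graph_ray:
  assumes "subspace M" "\<forall>(e, b)\<in>M. b + c \<le> N * norm (e + x)" "(d, a) \<in> M" "t > 0"
  shows "a + t * c \<le> N * norm (d + t *\<^sub>R x)"
proof -
  have "inverse t *\<^sub>R (d, a) \<in> M"
    using assms(1,3) subspace_mul by blast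
  then have "inverse t * a + c \<le> N * norm (inverse t *\<^sub>R d + x)"
    using assms(2) by fastforce
  then have "t * (inverse t * a + c) \<le> N * (t * norm (inverse t *\<^sub>R d + x))"
    using \<open>t > 0\<close> by (simp add: mult_left_mono mult.left_commute)
  also have "t * norm (inverse t *\<^sub>R d + x) = norm (t *\<^sub>R (inverse t *\<^sub>R d + x))"
    using \<open>t > 0\<close> by simp
  also have "t *\<^sub>R (inverse t *\<^sub>R d + x) = d + t *\<^sub>R x"
    using \<open>t > 0\<close> by (simp add: scaleR_add_right)
  finally show ?thesis
    using \<open>t > 0\<close> by (simp add: distrib_left flip: mult.assoc)
qed

lemma dominated_graph_extend:
  assumes "dominated_graph N M" "0 \<le> N"
  obtains c where "dominated_graph N {p + q | p q. p \<in> M \<and> q \<in> span {(x, c)}}"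
proof -
  have M: "subspace M" "\<forall>(e, b)\<in>M. b \<le> N * norm e"
    using assms(1) unfolding dominated_graph_def by auto
  have sep: "a - N * norm (d - x) \<le> N * norm (e + x) - b" if "(d, a) \<in> M" "(e, b) \<in> M" for d a e b
  proof -
    have "(d, a) + (e, b) \<in> M"
      using that M(1) subspace_add by blast
    then have "a + b \<le> N * norm ((d - x) + (e + x))"
      using M(2) by fastforce
    also have "\<dots> \<le> N * (norm (d - x) + norm (e + x))"
      by (intro mult_left_mono norm_triangle_ineq assms(2))
    finally show ?thesis by (simp add: distrib_left)
  qed
  \<comment> \<open>By \<open>sep\<close>, any c between this supremum and the infimum of the upper bounds works.\<close>
  define c where "c = (SUP (d, a)\<in>M. a - N * norm (d - x))"
  have "(0, 0) \<in> M"
    using M(1) subspace_0 by (metis zero_prod_def)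
  then have "bdd_above ((\<lambda>(d, a). a - N * norm (d - x)) ` M)"
    using sep by (fastforce simp: bdd_above_def intro!: exI[of _ "N * norm x"])
  then have below: "a - N * norm (d - x) \<le> c" if "(d, a) \<in> M" for d a
    unfolding c_def using that by (intro cSUP_upper2[of _ _ "(d, a)"]) auto
  have above: "c \<le> N * norm (e + x) - b" if "(e, b) \<in> M" for e b
    unfolding c_def using that sep \<open>(0, 0) \<in> M\<close> by (intro cSUP_least) auto
  have "(e, b) \<in> M \<Longrightarrow> b + c \<le> N * norm (e + x)"
       "(e, b) \<in> M \<Longrightarrow> b + (- c) \<le> N * norm (e + - x)" for e b
    using above below by fastforce+
  then have ray: "\<forall>(e, b)\<in>M. b + c \<le> N * norm (e + x)"
                 "\<forall>(e, b)\<in>M. b + (- c) \<le> N * norm (e + - x)" by auto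
  have "a + t * c \<le> N * norm (d + t *\<^sub>R x)" if "(d, a) \<in> M" for d a t
  proof (cases t "0 :: real" rule: linorder_cases)
    case less
    then show ?thesis
      using dominated_graph_ray[OF M(1) ray(2) that, of "- t"] by simp
  next
    case equal
    then show ?thesis using M(2) that by auto
  next
    case greater
    then show ?thesis using dominated_graph_ray[OF M(1) ray(1) that] by simp
  qed
  then have "\<forall>(y, b)\<in>{p + q | p q. p \<in> M \<and> q \<in> span {(x, c)}}. b \<le> N * norm y"
    by (auto simp: span_singleton)
  then show ?thesis
    using that M(1) subspace_sums[OF M(1) subspace_span] unfolding dominated_graph_def by blast
qed

lemma dominated_graph_total_blinfun:
  assumes "dominated_graph N M" "0 \<le> N" "\<And>x. \<exists>a. (x, a) \<in> M"
  obtains f :: "'a::real_normed_vector \<Rightarrow>\<^sub>L real"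
  where "\<forall>(x, a)\<in>M. blinfun_apply f x = a" "norm f \<le> N"
proof -
  have M: "subspace M" "\<forall>(x, a)\<in>M. a \<le> N * norm x"
    using assms(1) unfolding dominated_graph_def by auto
  define h where "h x = (THE a. (x, a) \<in> M)" for x
  have "\<exists>!a. (x, a) \<in> M" for x
    using assms(3)[of x] dominated_graph_functional[OF assms(1)] by blast
  then have "(x, h x) \<in> M" for x
    unfolding h_def by (rule theI')
  then have graph: "(x, a) \<in> M \<longleftrightarrow> a = h x" for x a
    using dominated_graph_functional[OF assms(1)] by blast
  have "(x, h x) + (y, h y) \<in> M" "c *\<^sub>R (x, h x) \<in> M" for x y c
    using graph M(1) subspace_add subspace_mul by blast+
  then have add: "h (x + y) = h x + h y" and scale: "h (c *\<^sub>R x) = c * h x" for x y c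
    by (simp_all add: graph)
  have upper: "h x \<le> N * norm x" for x
    using graph M(2) by fastforce
  have bound: "norm (h x) \<le> N * norm x" for x
    using upper[of x] upper[of "- x"] scale[of "-1" x] by (simp add: abs_le_iff)
  have "bounded_linear h"
    using add scale bound by (intro bounded_linear_intro[of _ N]) (auto simp: mult.commute)
  then have Bh: "blinfun_apply (Blinfun h) = h"
    by (rule bounded_linear_Blinfun_apply)
  show ?thesis
  proof (rule that)
    show "\<forall>(x, a)\<in>M. blinfun_apply (Blinfun h) x = a"
      using graph by (auto simp: Bh)
    show "norm (Blinfun h) \<le> N"
      using bound assms(2) by (intro norm_blinfun_bound) (auto simp: Bh)
  qed
qed

lemma dominated_graph_of_functional:
  assumes "subspace Y"
    and add: "\<forall>x\<in>Y. \<forall>y\<in>Y. g (x + y) = g x + g y" and scale: "\<forall>c. \<forall>y\<in>Y. g (c *\<^sub>R y) = c * g y"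
    and "\<forall>y\<in>Y. g y \<le> N * norm y"
  shows "dominated_graph N ((\<lambda>y. (y, g y)) ` Y)"
proof -
  have "subspace ((\<lambda>y. (y, g y)) ` Y)"
    unfolding subspace_def
  proof (intro conjI ballI allI)
    have "g 0 = 0"
      using scale subspace_0[OF assms(1)] by (metis mult_zero_left scaleR_zero_left)
    then show "0 \<in> (\<lambda>y. (y, g y)) ` Y"
      using subspace_0[OF assms(1)] by (auto simp: zero_prod_def)
  next
    fix p p' assume "p \<in> (\<lambda>y. (y, g y)) ` Y" "p' \<in> (\<lambda>y. (y, g y)) ` Y"
    then obtain y y' where "y \<in> Y" "y' \<in> Y" "p = (y, g y)" "p' = (y', g y')"
      by blast
    then have "p + p' = (y + y', g (y + y'))" "y + y' \<in> Y"
      using add subspace_add[OF assms(1)] by simp_all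
    then show "p + p' \<in> (\<lambda>y. (y, g y)) ` Y"
      by blast
  next
    fix c :: real and p assume "p \<in> (\<lambda>y. (y, g y)) ` Y"
    then obtain y where "y \<in> Y" "p = (y, g y)"
      by blast
    then have "c *\<^sub>R p = (c *\<^sub>R y, g (c *\<^sub>R y))" "c *\<^sub>R y \<in> Y"
      using scale subspace_mul[OF assms(1)] by simp_all
    then show "c *\<^sub>R p \<in> (\<lambda>y. (y, g y)) ` Y"
      by blast
  qed
  then show ?thesis
    using assms(4) unfolding dominated_graph_def by auto
qed

lemma Hahn_Banach_extension:
  fixes g :: "'a::real_normed_vector \<Rightarrow> real"
  assumes "subspace Y"
    and "\<forall>x\<in>Y. \<forall>y\<in>Y. g (x + y) = g x + g y" "\<forall>c. \<forall>y\<in>Y. g (c *\<^sub>R y) = c * g y"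
    and "\<forall>y\<in>Y. g y \<le> N * norm y" "0 \<le> N"
  obtains f :: "'a \<Rightarrow>\<^sub>L real" where "\<forall>y\<in>Y. blinfun_apply f y = g y" "norm f \<le> N"
proof -
  define G where "G = (\<lambda>y. (y, g y)) ` Y"
  define A where "A = {M. dominated_graph N M \<and> G \<subseteq> M}"
  have "G \<in> A"
    unfolding A_def G_def using dominated_graph_of_functional[OF assms(1-4)] by blast
  have "\<forall>C\<in>chains A. \<exists>U\<in>A. \<forall>M\<in>C. M \<subseteq> U"
  proof
    fix C assume "C \<in> chains A"
    show "\<exists>U\<in>A. \<forall>M\<in>C. M \<subseteq> U"
    proof (cases "C = {}")
      case True
      then show ?thesis using \<open>G \<in> A\<close> by blast
    next
      case False
      have "dominated_graph N (\<Union>C)"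
        using False \<open>C \<in> chains A\<close>
        by (intro dominated_graph_Union_chain) (auto simp: chains_def A_def)
      then have "\<Union>C \<in> A"
        using False \<open>C \<in> chains A\<close> unfolding chains_def A_def by blast
      then show ?thesis by blast
    qed
  qed
  from Zorn_Lemma2[OF this] obtain M where "M \<in> A" and maximal: "\<forall>M'\<in>A. M \<subseteq> M' \<longrightarrow> M' = M"
    by blast
  then have M: "dominated_graph N M" "G \<subseteq> M"
    unfolding A_def by auto
  \<comment> \<open>A maximal graph is total, since any point can be adjoined to it.\<close>
  have total: "\<exists>a. (x, a) \<in> M" for x
  proof -
    obtain c where extended: "dominated_graph N {p + q | p q. p \<in> M \<and> q \<in> span {(x, c)}}"
      using dominated_graph_extend[OF M(1) assms(5)] .
    define M' where "M' = {p + q | p q. p \<in> M \<and> q \<in> span {(x, c)}}"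
    have "dominated_graph N M'"
      using extended unfolding M'_def .
    have "p \<in> M'" if "p \<in> M" for p
      unfolding M'_def using that span_zero[of "{(x, c)}"] add_0_right[of p, symmetric] by blast
    then have "M \<subseteq> M'" by blast
    with \<open>dominated_graph N M'\<close> M(2) have "M' = M"
      using maximal unfolding A_def by blast
    moreover have "(x, c) \<in> M'"
      unfolding M'_def using M(1) subspace_0 span_base[of "(x, c)"] add_0_left[of "(x, c)", symmetric]
      unfolding dominated_graph_def by blast
    ultimately show ?thesis by blast
  qed
  obtain f :: "'a \<Rightarrow>\<^sub>L real" where f: "\<forall>(x, a)\<in>M. blinfun_apply f x = a" "norm f \<le> N"
    by (rule dominated_graph_total_blinfun[OF M(1) assms(5) total])
  have "\<forall>y\<in>Y. blinfun_apply f y = g y"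
    using f(1) M(2) unfolding G_def by fastforce
  then show ?thesis
    using that f(2) by blast
qed

lemma dual_norm_on_bdd_above:
  assumes "sub_dual S g"
  shows "bdd_above ((\<lambda>x. \<bar>g x\<bar>) ` {x\<in>S. norm x \<le> 1})"
proof -
  obtain K where K: "\<forall>x\<in>S. \<bar>g x\<bar> \<le> K * norm x"
    using assms unfolding sub_dual_def by blast
  have "\<bar>g x\<bar> \<le> \<bar>K\<bar>" if "x \<in> S" "norm x \<le> 1" for x
  proof -
    have "\<bar>g x\<bar> \<le> \<bar>K\<bar> * norm x"
      using K that by (meson abs_ge_self mult_right_mono norm_ge_zero order_trans)
    also have "\<dots> \<le> \<bar>K\<bar>"
      using that by (simp add: mult_left_le)
    finally show ?thesis .
  qed
  then show ?thesis
    unfolding bdd_above_def by blast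
qed

lemma dual_norm_on_upper:
  assumes "sub_dual S g" "y \<in> S" "norm y \<le> 1"
  shows "\<bar>g y\<bar> \<le> dual_norm_on S g"
  unfolding dual_norm_on_def
  using assms dual_norm_on_bdd_above[OF assms(1)] by (intro cSUP_upper) auto

lemma dual_norm_on_bound:
  assumes "sub_dual S g" "subspace S" "y \<in> S"
  shows "\<bar>g y\<bar> \<le> dual_norm_on S g * norm y"
proof (cases "y = 0")
  case True
  have "g 0 = 0"
    using assms(1) subspace_0[OF assms(2)] unfolding sub_dual_def
    by (metis mult_zero_left scaleR_zero_left)
  then show ?thesis using True by simp
next
  case False
  have "inverse (norm y) *\<^sub>R y \<in> S"
    using assms(2,3) subspace_mul by blast
  then have "\<bar>g (inverse (norm y) *\<^sub>R y)\<bar> \<le> dual_norm_on S g"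
    using False by (intro dual_norm_on_upper[OF assms(1)]) simp_all
  moreover have "g (inverse (norm y) *\<^sub>R y) = g y / norm y"
    using assms(1,3) unfolding sub_dual_def by (simp add: divide_inverse_commute)
  ultimately show ?thesis
    using False by (simp add: abs_div divide_le_eq)
qed

lemma dual_norm_on_least:
  assumes "subspace S" "\<forall>y\<in>S. \<bar>g y\<bar> \<le> M * norm y" "0 \<le> M"
  shows "dual_norm_on S g \<le> M"
  unfolding dual_norm_on_def
proof (rule cSUP_least)
  show "{x \<in> S. norm x \<le> 1} \<noteq> {}"
    using subspace_0[OF assms(1)] by force
next
  fix x assume "x \<in> {x \<in> S. norm x \<le> 1}"
  then have "\<bar>g x\<bar> \<le> M * norm x" "norm x \<le> 1"
    using assms(2) by auto
  then show "\<bar>g x\<bar> \<le> M"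
    using assms(3) by (meson mult_left_le order_trans)
qed

lemma dual_norm_on_le_norm_extension:
  assumes "subspace S" "\<forall>y\<in>S. blinfun_apply f y = g y"
  shows "dual_norm_on S g \<le> norm f"
proof (rule dual_norm_on_least[OF assms(1) _ norm_ge_zero])
  show "\<forall>y\<in>S. \<bar>g y\<bar> \<le> norm f * norm y"
    using assms(2) norm_blinfun[of f] by (metis real_norm_def)
qed

lemma sub_dual_norm_preserving_extension:
  assumes "subspace Y" "sub_dual Y g"
  obtains f :: "'a::real_normed_vector \<Rightarrow>\<^sub>L real"
  where "\<forall>y\<in>Y. blinfun_apply f y = g y" "norm f = dual_norm_on Y g"
proof -
  have linear: "\<forall>x\<in>Y. \<forall>y\<in>Y. g (x + y) = g x + g y" "\<forall>c. \<forall>y\<in>Y. g (c *\<^sub>R y) = c * g y"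
    using assms(2) unfolding sub_dual_def by blast+
  have "\<forall>y\<in>Y. g y \<le> dual_norm_on Y g * norm y"
    using dual_norm_on_bound[OF assms(2,1)] abs_le_D1 by blast
  moreover have "0 \<le> dual_norm_on Y g"
    using dual_norm_on_upper[OF assms(2) subspace_0[OF assms(1)]] by simp
  ultimately obtain f :: "'a \<Rightarrow>\<^sub>L real"
    where f: "\<forall>y\<in>Y. blinfun_apply f y = g y" "norm f \<le> dual_norm_on Y g"
    by (rule Hahn_Banach_extension[OF assms(1) linear])
  show ?thesis
  proof (rule that[OF f(1)])
    show "norm f = dual_norm_on Y g"
      by (intro antisym f(2) dual_norm_on_le_norm_extension[OF assms(1) f(1)])
  qed
qed

lemma realises_quotient_zero:
  "realises_quotient Z q \<Longrightarrow> 0 \<in> Z"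
  unfolding realises_quotient_def using linear_0 by blast

lemma realises_quotient_norm_le:
  assumes "realises_quotient Z q"
  shows "norm (q x) \<le> norm x"
  using assms infdist_le[OF realises_quotient_zero[OF assms], of x]
  unfolding realises_quotient_def by simp

lemma annihilator_le_infdist:
  assumes "u \<in> annihilator Z" "Z \<noteq> {}"
  shows "\<bar>blinfun_apply u x\<bar> \<le> norm u * infdist x Z"
proof (cases "norm u = 0")
  case False
  then have "norm u > 0" by simp
  have "\<bar>blinfun_apply u x\<bar> / norm u \<le> dist x z" if "z \<in> Z" for z
  proof -
    have "\<bar>blinfun_apply u x\<bar> = \<bar>blinfun_apply u (x - z)\<bar>"
      using assms(1) that unfolding annihilator_def by (simp add: blinfun.diff_right)
    also have "\<dots> \<le> norm u * norm (x - z)"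
      using norm_blinfun[of u "x - z"] by simp
    finally show ?thesis
      using \<open>norm u > 0\<close> by (simp add: dist_norm divide_le_eq mult.commute)
  qed
  then have "\<bar>blinfun_apply u x\<bar> / norm u \<le> infdist x Z"
    using assms(2) by (simp add: infdist_notempty cINF_greatest)
  then show ?thesis
    using \<open>norm u > 0\<close> by (simp add: divide_le_eq mult.commute)
qed simp

lemma annihilator_factors_through_quotient:
  fixes q :: "'a::real_normed_vector \<Rightarrow> 'b::real_normed_vector"
  assumes q: "realises_quotient Z q" and u: "u \<in> annihilator Z"
  obtains v :: "'b \<Rightarrow>\<^sub>L real" where "\<forall>x. blinfun_apply v (q x) = blinfun_apply u x" "norm v = norm u"
proof -
  have lin: "linear q" and "surj q" and ker: "\<And>x. q x = 0 \<longleftrightarrow> x \<in> Z"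
    and nq: "\<And>x. norm (q x) = infdist x Z"
    using q unfolding realises_quotient_def by auto
  define v where "v = blinfun_apply u \<circ> inv q"
  have vq: "v (q x) = blinfun_apply u x" for x
  proof -
    have "q (inv q (q x) - x) = 0"
      using \<open>surj q\<close> lin by (simp add: linear_diff surj_f_inv_f)
    then have "blinfun_apply u (inv q (q x) - x) = 0"
      using ker u unfolding annihilator_def by blast
    then show ?thesis
      unfolding v_def by (simp add: blinfun.diff_right)
  qed
  have "q (inv q a + inv q b) = a + b" "q (c *\<^sub>R inv q a) = c *\<^sub>R a" for a b c
    using \<open>surj q\<close> lin by (simp_all add: linear_add linear_scale surj_f_inv_f)
  then have "v (a + b) = v a + v b" "v (c *\<^sub>R a) = c *\<^sub>R v a" for a b c
    using vq[of "inv q a + inv q b"] vq[of "c *\<^sub>R inv q a"]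
    by (simp_all add: v_def blinfun.add_right blinfun.scaleR_right)
  moreover have bound: "norm (v b) \<le> norm u * norm b" for b
  proof -
    have "norm (v (q x)) \<le> norm u * norm (q x)" for x
      using annihilator_le_infdist[OF u, of x] realises_quotient_zero[OF q] by (auto simp: vq nq)
    from this[of "inv q b"] show ?thesis
      by (simp add: surj_f_inv_f[OF \<open>surj q\<close>])
  qed
  ultimately have "bounded_linear v"
    by (intro bounded_linear_intro[of _ "norm u"]) (auto simp: mult.commute)
  then have V: "blinfun_apply (Blinfun v) = v"
    by (rule bounded_linear_Blinfun_apply)
  have "norm (Blinfun v) \<le> norm u"
    using bound by (intro norm_blinfun_bound) (auto simp: V)
  moreover have "norm u \<le> norm (Blinfun v)"
  proof (rule norm_blinfun_bound)
    fix x
    have "norm (blinfun_apply u x) \<le> norm (Blinfun v) * norm (q x)"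
      using norm_blinfun[of "Blinfun v" "q x"] by (simp add: V vq)
    also have "\<dots> \<le> norm (Blinfun v) * norm x"
      using realises_quotient_norm_le[OF q] by (simp add: mult_left_mono)
    finally show "norm (blinfun_apply u x) \<le> norm (Blinfun v) * norm x" .
  qed simp
  ultimately show ?thesis
    using that[of "Blinfun v"] by (simp add: V vq)
qed

lemma semi_M_ideal_common_component:
  assumes "semi_M_ideal Z" "f1 - f2 \<in> annihilator Z"
  obtains u1 u2 w where "u1 \<in> annihilator Z" "u2 \<in> annihilator Z"
    "f1 = u1 + w" "f2 = u2 + w" "norm f1 = norm u1 + norm w" "norm f2 = norm u2 + norm w"
proof -
  obtain W where dec: "\<forall>f. \<exists>!p. fst p \<in> annihilator Z \<and> snd p \<in> W \<and> f = fst p + snd p"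
    and additive: "\<forall>u\<in>annihilator Z. \<forall>w\<in>W. norm (u + w) = norm u + norm w"
    using assms(1) unfolding semi_M_ideal_def by blast
  obtain p where "fst p \<in> annihilator Z" "snd p \<in> W" "f1 = fst p + snd p"
    using ex1_implies_ex[OF dec[rule_format, of f1]] by blast
  then obtain u1 w where u1: "u1 \<in> annihilator Z" and "w \<in> W" and f1: "f1 = u1 + w"
    by blast
  define u2 where "u2 = f2 - w"
  have "u2 = u1 - (f1 - f2)"
    using f1 unfolding u2_def by simp
  then have u2: "u2 \<in> annihilator Z"
    using u1 assms(2) unfolding annihilator_def by (simp add: blinfun.diff_left)
  have f2: "f2 = u2 + w"
    unfolding u2_def by simp
  show ?thesis
  proof (rule that[OF u1 u2 f1 f2])
    show "norm f1 = norm u1 + norm w"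
      unfolding f1 by (rule additive[rule_format, OF u1 \<open>w \<in> W\<close>])
    show "norm f2 = norm u2 + norm w"
      unfolding f2 by (rule additive[rule_format, OF u2 \<open>w \<in> W\<close>])
  qed
qed

lemma annihilator_eq_if_quotient_wU:
  fixes q :: "'a::real_normed_vector \<Rightarrow> 'b::real_normed_vector"
  assumes q: "realises_quotient Z q" and "subspace Y" and wU: "property_wU (q ` Y)"
    and u: "u1 \<in> annihilator Z" "u2 \<in> annihilator Z" "norm u1 = norm u2"
    and agree: "\<forall>y\<in>Y. blinfun_apply u1 y = blinfun_apply u2 y"
    and y0: "y0 \<in> Y" "norm y0 \<le> 1" "blinfun_apply u1 y0 = norm u1"
  shows "u1 = u2"
proof (cases "norm u1 = 0")
  case True
  then show ?thesis using u(3) by simp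
next
  case False
  obtain v1 where v1: "\<forall>x. blinfun_apply v1 (q x) = blinfun_apply u1 x" "norm v1 = norm u1"
    by (rule annihilator_factors_through_quotient[OF q u(1)])
  obtain v2 where v2: "\<forall>x. blinfun_apply v2 (q x) = blinfun_apply u2 x" "norm v2 = norm u2"
    by (rule annihilator_factors_through_quotient[OF q u(2)])
  have "subspace (q ` Y)"
    using q \<open>subspace Y\<close> unfolding realises_quotient_def by (simp add: linear_subspace_image)
  have "norm u1 \<le> norm u1 * norm (q y0)"
    using norm_blinfun[of v1 "q y0"] v1 y0(3) by simp
  then have qy0: "norm (q y0) = 1"
    using realises_quotient_norm_le[OF q, of y0] y0(2) False by (simp add: mult_le_cancel_left1)
  have sd: "sub_dual (q ` Y) (blinfun_apply v1)"
    unfolding sub_dual_def using norm_blinfun[of v1]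
    by (auto simp: blinfun.add_right blinfun.scaleR_right simp flip: real_norm_def)
  have dn: "dual_norm_on (q ` Y) (blinfun_apply v1) = norm u1"
  proof (rule antisym)
    show "dual_norm_on (q ` Y) (blinfun_apply v1) \<le> norm u1"
      using dual_norm_on_le_norm_extension[OF \<open>subspace (q ` Y)\<close>, of v1] v1(2) by simp
    show "norm u1 \<le> dual_norm_on (q ` Y) (blinfun_apply v1)"
      using dual_norm_on_upper[OF sd, of "q y0"] qy0 y0 v1(1) by simp
  qed
  have "\<exists>b\<in>q ` Y. norm b = 1 \<and> blinfun_apply v1 b = dual_norm_on (q ` Y) (blinfun_apply v1)"
    using y0 qy0 v1(1) dn by (intro bexI[of _ "q y0"]) auto
  with sd have uniq: "\<exists>!v. (\<forall>b\<in>q ` Y. blinfun_apply v b = blinfun_apply v1 b)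
      \<and> norm v = dual_norm_on (q ` Y) (blinfun_apply v1)"
    using wU[unfolded property_wU_def, THEN spec[where x = "blinfun_apply v1"]] by blast
  have P1: "(\<forall>b\<in>q ` Y. blinfun_apply v1 b = blinfun_apply v1 b)
      \<and> norm v1 = dual_norm_on (q ` Y) (blinfun_apply v1)"
    using v1(2) dn by simp
  have "\<forall>b\<in>q ` Y. blinfun_apply v2 b = blinfun_apply v1 b"
    using agree v1(1) v2(1) by auto
  then have P2: "(\<forall>b\<in>q ` Y. blinfun_apply v2 b = blinfun_apply v1 b)
      \<and> norm v2 = dual_norm_on (q ` Y) (blinfun_apply v1)"
    using v1(2) v2(2) u(3) dn by simp
  have "v1 = v2"
    using the1_equality[OF uniq P1] the1_equality[OF uniq P2] by simp
  show ?thesis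
  proof (rule blinfun_eqI)
    fix x
    have "blinfun_apply u1 x = blinfun_apply v1 (q x)"
      using v1(1) by simp
    also have "\<dots> = blinfun_apply u2 x"
      using v2(1) \<open>v1 = v2\<close> by simp
    finally show "blinfun_apply u1 x = blinfun_apply u2 x" .
  qed
qed

lemma blinfun_apply_le_norm:
  fixes f :: "'a::real_normed_vector \<Rightarrow>\<^sub>L real"
  assumes "norm x \<le> 1"
  shows "blinfun_apply f x \<le> norm f"
proof -
  have "blinfun_apply f x \<le> norm f * norm x"
    using norm_blinfun[of f x] by simp
  also have "\<dots> \<le> norm f"
    using assms by (simp add: mult_left_le)
  finally show ?thesis .
qed

lemma norm_attaining_functionals_eq:
  fixes q :: "'a::real_normed_vector \<Rightarrow> 'b::real_normed_vector"
  assumes "semi_M_ideal Z" "realises_quotient Z q" "subspace Y" "Z \<subseteq> Y" "property_wU (q ` Y)"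
    and agree: "\<forall>y\<in>Y. blinfun_apply f1 y = blinfun_apply f2 y" and "norm f1 = norm f2"
    and y0: "y0 \<in> Y" "norm y0 \<le> 1" "blinfun_apply f1 y0 = norm f1"
  shows "f1 = f2"
proof -
  have "f1 - f2 \<in> annihilator Z"
    using agree \<open>Z \<subseteq> Y\<close> unfolding annihilator_def by (auto simp: blinfun.diff_left)
  then obtain u1 u2 w where u: "u1 \<in> annihilator Z" "u2 \<in> annihilator Z"
    and dec: "f1 = u1 + w" "f2 = u2 + w" "norm f1 = norm u1 + norm w" "norm f2 = norm u2 + norm w"
    by (rule semi_M_ideal_common_component[OF assms(1)])
  have "\<forall>y\<in>Y. blinfun_apply u1 y = blinfun_apply u2 y"
  proof
    fix y assume "y \<in> Y"
    then have "blinfun_apply u1 y + blinfun_apply w y = blinfun_apply u2 y + blinfun_apply w y"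
      using agree dec(1,2) by (simp add: blinfun.add_left)
    then show "blinfun_apply u1 y = blinfun_apply u2 y" by simp
  qed
  moreover have "blinfun_apply u1 y0 = norm u1"
  proof (rule antisym)
    have "blinfun_apply u1 y0 + blinfun_apply w y0 = norm u1 + norm w"
      using y0(3) dec(1,3) by (simp add: blinfun.add_left)
    moreover have "blinfun_apply w y0 \<le> norm w"
      using y0(2) by (rule blinfun_apply_le_norm)
    ultimately show "norm u1 \<le> blinfun_apply u1 y0"
      by linarith
    show "blinfun_apply u1 y0 \<le> norm u1"
      using y0(2) by (rule blinfun_apply_le_norm)
  qed
  moreover have "norm u1 = norm u2"
    using \<open>norm f1 = norm f2\<close> dec(3,4) by simp
  ultimately have "u1 = u2"
    using annihilator_eq_if_quotient_wU[OF assms(2,3,5) u] y0(1,2) by blast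
  then show ?thesis
    using dec(1,2) by simp
qed

theorem theorem2p2:
  fixes Y Z :: "'a::banach set" and q :: "'a \<Rightarrow> 'b::real_normed_vector"
  assumes "subspace Y" "closed Y" "subspace Z" "closed Z" "Z \<subseteq> Y"
    and "realises_quotient Z q"
    and "semi_M_ideal Z"
    and "property_wU (q ` Y)"
  shows "property_wU Y"
  unfolding property_wU_def
proof (intro allI impI)
  fix g assume "sub_dual Y g \<and> (\<exists>y0\<in>Y. norm y0 = 1 \<and> g y0 = dual_norm_on Y g)"
  then obtain y0 where g: "sub_dual Y g" and y0: "y0 \<in> Y" "norm y0 = 1" "g y0 = dual_norm_on Y g"
    by blast
  obtain f where f: "\<forall>y\<in>Y. blinfun_apply f y = g y" "norm f = dual_norm_on Y g"
    by (rule sub_dual_norm_preserving_extension[OF assms(1) g])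
  show "\<exists>!f::'a \<Rightarrow>\<^sub>L real. (\<forall>y\<in>Y. blinfun_apply f y = g y) \<and> norm f = dual_norm_on Y g"
  proof (rule ex1I[of _ f])
    show "(\<forall>y\<in>Y. blinfun_apply f y = g y) \<and> norm f = dual_norm_on Y g"
      using f by blast
    fix f' assume "(\<forall>y\<in>Y. blinfun_apply f' y = g y) \<and> norm f' = dual_norm_on Y g"
    then show "f' = f"
      using f y0 by (intro norm_attaining_functionals_eq[OF assms(7,6,1,5,8)]) auto
  qed
qed

end
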